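(* Suppose that $X$ is a finite-dimensional real Hilbert space and that $U,V$ are linear subspaces of $X$. Then \[ P_{U+V}=\mathrm{Id}-2P_{U^\perp}(P_{U^\perp}+P_{V^\perp})^\dagger P_{V^\perp}=\mathrm{Id}-2(\mathrm{Id}-P_U)\big(2\mathrm{Id}-P_U-P_V\big)^\dagger(\mathrm{Id}-P_V). \]
   Context: $P_S$ denotes the orthogonal projection onto $S$, and $A^\dagger$ denotes the Moore-Penrose inverse of the linear map $A$. *)

theory Defs
  imports "HOL-Analysis.Analysis"
begin

definition orth_proj :: "'a::euclidean_space set \<Rightarrow> 'a \<Rightarrow> 'a" where
  "orth_proj S x = (THE p. p \<in> S \<and> x - p \<in> orthogonal_comp S)"

definition moore_penrose :: "('a::euclidean_space \<Rightarrow> 'b::euclidean_space) \<Rightarrow> 'b \<Rightarrow> 'a" where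
  "moore_penrose A = (THE B. linear B \<and> A \<circ> B \<circ> A = A \<and> B \<circ> A \<circ> B = B \<and>
      (\<forall>x y. A (B x) \<bullet> y = x \<bullet> A (B y)) \<and> (\<forall>x y. B (A x) \<bullet> y = x \<bullet> B (A y)))"

end

theory Submission imports Defs begin

text \<open>
  Write \<open>A = P\<^sub>U\<^sub>\<bottom>\<close>, \<open>B = P\<^sub>V\<^sub>\<bottom>\<close> and \<open>S = A + B\<close>. Since \<open>(S x) \<bullet> x = |A x|\<^sup>2 + |B x|\<^sup>2\<close>,
  the self-adjoint map \<open>S\<close> has kernel \<open>K = U \<inter> V\<close>, so its Moore-Penrose inverse \<open>T\<close> satisfies
  \<open>T S = S T = Id - P\<^sub>K\<close>. As \<open>A P\<^sub>K = 0\<close> this gives \<open>A T B = A - A T A\<close>, a self-adjoint map,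
  so \<open>A T B = B T A\<close>. Now \<open>x - 2 A T B x = (P\<^sub>K x + T B x - A T B x) + (T A x - B T A x)\<close>
  lies in \<open>U + V\<close>, because \<open>Id - A = P\<^sub>U\<close> and \<open>Id - B = P\<^sub>V\<close>, while \<open>2 A T B x = 2 B T A x\<close>
  lies in \<open>U\<^sup>\<bottom> \<inter> V\<^sup>\<bottom> = (U + V)\<^sup>\<bottom>\<close>.
\<close>

section \<open>Orthogonal projections\<close>

lemma orth_proj_eqI:
  fixes S :: "'a::euclidean_space set"
  assumes "subspace S" "p \<in> S" "x - p \<in> S\<^sup>\<bottom>"
  shows "orth_proj S x = p"
  unfolding orth_proj_def
proof (rule the_equality)
  show "p \<in> S \<and> x - p \<in> S\<^sup>\<bottom>" using assms by auto
next
  fix q assume q: "q \<in> S \<and> x - q \<in> S\<^sup>\<bottom>"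
  have "p - q \<in> S" using assms q by (simp add: subspace_diff)
  moreover have "p - q \<in> S\<^sup>\<bottom>"
    using subspace_diff[OF subspace_orthogonal_comp, of "x - q" S "x - p"] assms q by simp
  ultimately have "p - q = 0"
    using orthogonal_Int_0[OF \<open>subspace S\<close>] by blast
  then show "q = p" by simp
qed

lemma orth_proj_in_and_diff_in_orthogonal_comp:
  fixes S :: "'a::euclidean_space set"
  assumes "subspace S"
  shows "orth_proj S x \<in> S \<and> x - orth_proj S x \<in> S\<^sup>\<bottom>"
proof -
  obtain p q where "p \<in> S" "q \<in> S\<^sup>\<bottom>" "x = p + q"
    using subspace_sum_orthogonal_comp[OF assms] set_plus_elim by (metis UNIV_I)
  then have "orth_proj S x = p"
    by (intro orth_proj_eqI assms) auto
  with \<open>p \<in> S\<close> \<open>q \<in> S\<^sup>\<bottom>\<close> \<open>x = p + q\<close> show ?thesis by simp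
qed

lemma orth_proj_in: "subspace S \<Longrightarrow> orth_proj S x \<in> S"
  using orth_proj_in_and_diff_in_orthogonal_comp by blast

lemma diff_orth_proj_in_orthogonal_comp: "subspace S \<Longrightarrow> x - orth_proj S x \<in> S\<^sup>\<bottom>"
  using orth_proj_in_and_diff_in_orthogonal_comp by blast

lemma orthogonal_comp_inner_eq_0: "y \<in> S\<^sup>\<bottom> \<Longrightarrow> s \<in> S \<Longrightarrow> s \<bullet> y = 0"
  by (auto simp: orthogonal_comp_def orthogonal_def)

lemma orth_proj_id: "subspace S \<Longrightarrow> x \<in> S \<Longrightarrow> orth_proj S x = x"
  by (rule orth_proj_eqI) (auto simp: subspace_0 subspace_orthogonal_comp)

lemma orth_proj_eq_0: "subspace S \<Longrightarrow> x \<in> S\<^sup>\<bottom> \<Longrightarrow> orth_proj S x = 0"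
  by (rule orth_proj_eqI) (auto simp: subspace_0)

lemma orth_proj_idem: "subspace S \<Longrightarrow> orth_proj S (orth_proj S x) = orth_proj S x"
  by (simp add: orth_proj_id orth_proj_in)

lemma linear_orth_proj:
  fixes S :: "'a::euclidean_space set"
  assumes S: "subspace S"
  shows "linear (orth_proj S)"
proof
  fix x y
  have "(x - orth_proj S x) + (y - orth_proj S y) \<in> S\<^sup>\<bottom>"
    by (intro subspace_add[OF subspace_orthogonal_comp] diff_orth_proj_in_orthogonal_comp S)
  then show "orth_proj S (x + y) = orth_proj S x + orth_proj S y"
    by (intro orth_proj_eqI S subspace_add orth_proj_in) (simp_all add: algebra_simps)
next
  fix c x
  have "c *\<^sub>R (x - orth_proj S x) \<in> S\<^sup>\<bottom>"
    by (intro subspace_scale[OF subspace_orthogonal_comp] diff_orth_proj_in_orthogonal_comp S)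
  then show "orth_proj S (c *\<^sub>R x) = c *\<^sub>R orth_proj S x"
    by (intro orth_proj_eqI S subspace_scale orth_proj_in) (simp_all add: algebra_simps)
qed

lemma orth_proj_inner_commute:
  assumes "subspace S"
  shows "orth_proj S x \<bullet> y = x \<bullet> orth_proj S y"
proof -
  have "orth_proj S x \<bullet> (y - orth_proj S y) = 0" "orth_proj S y \<bullet> (x - orth_proj S x) = 0"
    using orthogonal_comp_inner_eq_0[OF diff_orth_proj_in_orthogonal_comp orth_proj_in] assms
    by blast+
  then show ?thesis by (simp add: inner_diff_left inner_diff_right inner_commute)
qed

lemma orth_proj_orthogonal_comp:
  assumes "subspace S"
  shows "orth_proj (S\<^sup>\<bottom>) x = x - orth_proj S x"
proof (rule orth_proj_eqI[OF subspace_orthogonal_comp])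
  show "x - orth_proj S x \<in> S\<^sup>\<bottom>" by (rule diff_orth_proj_in_orthogonal_comp[OF assms])
  show "x - (x - orth_proj S x) \<in> S\<^sup>\<bottom>\<^sup>\<bottom>"
    using orth_proj_in[OF assms] orthogonal_comp_subset by auto
qed

lemma orth_proj_inner_self: "subspace S \<Longrightarrow> orth_proj S x \<bullet> x = (norm (orth_proj S x))\<^sup>2"
  by (metis orth_proj_idem orth_proj_inner_commute power2_norm_eq_inner)

section \<open>Moore-Penrose inverse of a self-adjoint map\<close>

lemma moore_penrose_eqI:
  fixes A :: "'a::euclidean_space \<Rightarrow> 'b::euclidean_space"
  assumes "linear B"
    and ABA: "\<And>x. A (B (A x)) = A x" and BAB: "\<And>x. B (A (B x)) = B x"
    and AB_sym: "\<And>x y. A (B x) \<bullet> y = x \<bullet> A (B y)" and BA_sym: "\<And>x y. B (A x) \<bullet> y = x \<bullet> B (A y)"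
  shows "moore_penrose A = B"
  unfolding moore_penrose_def
proof (rule the_equality)
  show "linear B \<and> A \<circ> B \<circ> A = A \<and> B \<circ> A \<circ> B = B \<and>
      (\<forall>x y. A (B x) \<bullet> y = x \<bullet> A (B y)) \<and> (\<forall>x y. B (A x) \<bullet> y = x \<bullet> B (A y))"
    using assms by (auto simp: fun_eq_iff)
next
  fix C assume "linear C \<and> A \<circ> C \<circ> A = A \<and> C \<circ> A \<circ> C = C \<and>
      (\<forall>x y. A (C x) \<bullet> y = x \<bullet> A (C y)) \<and> (\<forall>x y. C (A x) \<bullet> y = x \<bullet> C (A y))"
  then have ACA: "\<And>x. A (C (A x)) = A x" and CAC: "\<And>x. C (A (C x)) = C x"
    and AC_sym: "\<And>x y. A (C x) \<bullet> y = x \<bullet> A (C y)" and CA_sym: "\<And>x y. C (A x) \<bullet> y = x \<bullet> C (A y)"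
    by (auto simp: fun_eq_iff)
  have AB_eq_AC: "A (B x) = A (C x)" for x
  proof -
    have "A (B x) \<bullet> y = A (C x) \<bullet> y" for y
    proof -
      have "A (B x) \<bullet> y = A (C (A (B x))) \<bullet> y" by (simp only: ACA)
      also have "\<dots> = A (B x) \<bullet> A (C y)" by (rule AC_sym)
      also have "\<dots> = x \<bullet> A (B (A (C y)))" by (rule AB_sym)
      also have "\<dots> = A (C x) \<bullet> y" by (simp only: ABA AC_sym)
      finally show ?thesis .
    qed
    then show ?thesis using vector_eq_rdot by blast
  qed
  have BA_eq_CA: "B (A x) = C (A x)" for x
  proof -
    have "B (A x) \<bullet> y = C (A x) \<bullet> y" for y
    proof -
      have "B (A x) \<bullet> y = B (A (C (A x))) \<bullet> y" by (simp only: ACA)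
      also have "\<dots> = C (A x) \<bullet> B (A y)" by (rule BA_sym)
      also have "\<dots> = x \<bullet> C (A (B (A y)))" by (rule CA_sym)
      also have "\<dots> = C (A x) \<bullet> y" by (simp only: ABA CA_sym)
      finally show ?thesis .
    qed
    then show ?thesis using vector_eq_rdot by blast
  qed
  show "C = B"
  proof
    fix x
    have "B x = B (A (C x))" by (simp only: BAB flip: AB_eq_AC)
    also have "\<dots> = C x" by (simp only: BA_eq_CA CAC)
    finally show "C x = B x" by simp
  qed
qed

lemma orth_proj_kernel_selfadjoint:
  fixes S :: "'a::euclidean_space \<Rightarrow> 'a"
  assumes S: "linear S" and S_sym: "\<And>x y. S x \<bullet> y = x \<bullet> S y"
  shows "S (orth_proj {x. S x = 0} x) = 0" and "orth_proj {x. S x = 0} (S x) = 0"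
proof -
  have K: "subspace {x. S x = 0}" by (rule linear_subspace_kernel[OF S])
  then show "S (orth_proj {x. S x = 0} x) = 0" using orth_proj_in by blast
  have "z \<bullet> S x = 0" if "S z = 0" for z
  proof -
    have "z \<bullet> S x = S x \<bullet> z" by (rule inner_commute)
    also have "\<dots> = x \<bullet> S z" by (rule S_sym)
    finally show ?thesis using that by simp
  qed
  then have "S x \<in> {x. S x = 0}\<^sup>\<bottom>" by (simp add: orthogonal_comp_def orthogonal_def)
  then show "orth_proj {x. S x = 0} (S x) = 0" by (rule orth_proj_eq_0[OF K])
qed

lemma inj_selfadjoint_add_orth_proj_kernel:
  fixes S :: "'a::euclidean_space \<Rightarrow> 'a"
  assumes S: "linear S" and S_sym: "\<And>x y. S x \<bullet> y = x \<bullet> S y"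
  defines "P \<equiv> orth_proj {x. S x = 0}"
  shows "inj (\<lambda>x. S x + P x)"
proof -
  have K: "subspace {x. S x = 0}" by (rule linear_subspace_kernel[OF S])
  have P: "linear P" unfolding P_def by (rule linear_orth_proj[OF K])
  have P_idem: "P (P x) = P x" for x unfolding P_def by (rule orth_proj_idem[OF K])
  have "x = 0" if "S x + P x = 0" for x
  proof -
    from that have Sx: "S x = - P x" by (simp add: eq_neg_iff_add_eq_0)
    have "0 = P (S x)" unfolding P_def by (simp add: orth_proj_kernel_selfadjoint[OF S S_sym])
    also have "\<dots> = - P x" by (simp add: Sx linear_neg[OF P] P_idem)
    finally have "P x = 0" by simp
    with Sx have "S x = 0" by simp
    with \<open>P x = 0\<close> show "x = 0" by (simp add: P_def orth_proj_id[OF K])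
  qed
  then show ?thesis
    using linear_injective_0[OF linear_compose_add[OF S P]] by blast
qed

lemma selfadjoint_pseudoinverse_exists:
  fixes S :: "'a::euclidean_space \<Rightarrow> 'a"
  assumes S: "linear S" and S_sym: "\<And>x y. S x \<bullet> y = x \<bullet> S y"
  defines "P \<equiv> orth_proj {x. S x = 0}"
  obtains T where "linear T" "\<And>x y. T x \<bullet> y = x \<bullet> T y"
    "\<And>x. S (T x) = x - P x" "\<And>x. T (S x) = x - P x" "\<And>x. T (P x) = 0"
proof -
  have K: "subspace {x. S x = 0}" by (rule linear_subspace_kernel[OF S])
  have P: "linear P" unfolding P_def by (rule linear_orth_proj[OF K])
  have P_idem: "P (P x) = P x" for x unfolding P_def by (rule orth_proj_idem[OF K])
  have P_sym: "P x \<bullet> y = x \<bullet> P y" for x y unfolding P_def by (rule orth_proj_inner_commute[OF K])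
  have SP: "S (P x) = 0" and PS: "P (S x) = 0" for x
    unfolding P_def by (rule orth_proj_kernel_selfadjoint[OF S S_sym])+
  \<comment> \<open>\<open>S'\<close> agrees with \<open>S\<close> on the range of \<open>S\<close> and with the identity on its kernel.\<close>
  define S' where "S' x = S x + P x" for x
  have S': "linear S'" unfolding S'_def[abs_def] using S P by (rule linear_compose_add)
  have "inj S'"
    unfolding S'_def[abs_def] P_def by (rule inj_selfadjoint_add_orth_proj_kernel[OF S S_sym])
  then obtain G where G: "linear G" and GS': "\<And>x. G (S' x) = x" and S'G: "\<And>x. S' (G x) = x"
    using linear_injective_isomorphism[OF S' \<open>inj S'\<close>] by blast
  have S'_sym: "S' x \<bullet> y = x \<bullet> S' y" for x y
    using S_sym[of x y] P_sym[of x y] by (simp add: S'_def inner_add_left inner_add_right)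
  have G_sym: "G x \<bullet> y = x \<bullet> G y" for x y
    using S'_sym[of "G x" "G y"] by (simp add: S'G)
  have GP: "G (P x) = P x" for x
    using GS'[of "P x"] by (simp add: S'_def SP P_idem)
  define T where "T x = G (x - P x)" for x
  show thesis
  proof
    show "linear T"
      unfolding T_def[abs_def] using linear_compose[OF linear_compose_sub[OF linear_id P] G]
      by (simp add: o_def id_def)
    have T_eq: "T x = G x - P x" for x by (simp add: T_def linear_diff[OF G] GP)
    show "T x \<bullet> y = x \<bullet> T y" for x y
      by (simp add: T_eq inner_diff_left inner_diff_right G_sym P_sym)
    show "T (P x) = 0" for x by (simp add: T_def P_idem linear_0[OF G])
    show "T (S x) = x - P x" for x
    proof -
      have "S' (x - P x) = S x"
        by (simp add: S'_def linear_diff[OF S] linear_diff[OF P] SP P_idem)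
      then have "G (S x) = x - P x" by (metis GS')
      then show ?thesis by (simp add: T_def PS)
    qed
    show "S (T x) = x - P x" for x
    proof -
      have S'T: "S' (T x) = x - P x" by (simp add: T_def S'G)
      then have "P (S' (T x)) = 0" by (simp add: linear_diff[OF P] P_idem)
      then have "P (T x) = 0" by (simp add: S'_def linear_add[OF P] PS P_idem)
      with S'T show ?thesis by (simp add: S'_def)
    qed
  qed
qed

lemma moore_penrose_selfadjoint:
  fixes S :: "'a::euclidean_space \<Rightarrow> 'a"
  assumes S: "linear S" and S_sym: "\<And>x y. S x \<bullet> y = x \<bullet> S y"
  defines "P \<equiv> orth_proj {x. S x = 0}"
  shows "linear (moore_penrose S)" "moore_penrose S x \<bullet> y = x \<bullet> moore_penrose S y"
    "S (moore_penrose S x) = x - P x" "moore_penrose S (S x) = x - P x"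
proof -
  have K: "subspace {x. S x = 0}" by (rule linear_subspace_kernel[OF S])
  have P_sym: "P x \<bullet> y = x \<bullet> P y" for x y unfolding P_def by (rule orth_proj_inner_commute[OF K])
  have SP: "S (P x) = 0" for x
    unfolding P_def by (rule orth_proj_kernel_selfadjoint[OF S S_sym])
  obtain T where T: "linear T" and T_sym: "\<And>x y. T x \<bullet> y = x \<bullet> T y"
    and ST: "\<And>x. S (T x) = x - P x" and TS: "\<And>x. T (S x) = x - P x" and TP: "\<And>x. T (P x) = 0"
    using selfadjoint_pseudoinverse_exists[OF S S_sym] unfolding P_def by blast
  have "moore_penrose S = T"
  proof (rule moore_penrose_eqI[OF T])
    show "S (T (S x)) = S x" for x by (simp add: TS linear_diff[OF S] SP)
    show "T (S (T x)) = T x" for x by (simp add: ST linear_diff[OF T] TP)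
    show "S (T x) \<bullet> y = x \<bullet> S (T y)" "T (S x) \<bullet> y = x \<bullet> T (S y)" for x y
      by (simp_all add: ST TS inner_diff_left inner_diff_right P_sym)
  qed
  with T T_sym ST TS show "linear (moore_penrose S)" "moore_penrose S x \<bullet> y = x \<bullet> moore_penrose S y"
    "S (moore_penrose S x) = x - P x" "moore_penrose S (S x) = x - P x"
    by simp_all
qed

section \<open>The projection onto a sum of subspaces\<close>

lemma orth_proj_orthogonal_comp_eq_0_iff:
  fixes U :: "'a::euclidean_space set"
  assumes "subspace U"
  shows "orth_proj (U\<^sup>\<bottom>) x = 0 \<longleftrightarrow> x \<in> U"
proof
  assume "orth_proj (U\<^sup>\<bottom>) x = 0"
  then have "x = orth_proj U x" by (simp add: orth_proj_orthogonal_comp[OF assms])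
  then show "x \<in> U" by (metis orth_proj_in[OF assms])
next
  assume "x \<in> U"
  then show "orth_proj (U\<^sup>\<bottom>) x = 0"
    using orth_proj_eq_0[OF subspace_orthogonal_comp] orthogonal_comp_subset by blast
qed

lemma kernel_orth_proj_orthogonal_comp_add:
  fixes U V :: "'a::euclidean_space set"
  assumes U: "subspace U" and V: "subspace V"
  shows "{x. orth_proj (U\<^sup>\<bottom>) x + orth_proj (V\<^sup>\<bottom>) x = 0} = U \<inter> V"
proof -
  have "orth_proj (U\<^sup>\<bottom>) x + orth_proj (V\<^sup>\<bottom>) x = 0 \<longleftrightarrow>
      orth_proj (U\<^sup>\<bottom>) x = 0 \<and> orth_proj (V\<^sup>\<bottom>) x = 0" for x
  proof -
    have "(orth_proj (U\<^sup>\<bottom>) x + orth_proj (V\<^sup>\<bottom>) x) \<bullet> x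
        = (norm (orth_proj (U\<^sup>\<bottom>) x))\<^sup>2 + (norm (orth_proj (V\<^sup>\<bottom>) x))\<^sup>2"
      by (simp add: inner_add_left orth_proj_inner_self subspace_orthogonal_comp)
    then show ?thesis
      by (metis add_0 inner_zero_left norm_eq_zero sum_power2_eq_zero_iff)
  qed
  then show ?thesis by (auto simp: orth_proj_orthogonal_comp_eq_0_iff U V)
qed

lemma moore_penrose_orth_proj_orthogonal_comp_add:
  fixes U V :: "'a::euclidean_space set"
  assumes U: "subspace U" and V: "subspace V"
  defines "S \<equiv> \<lambda>y. orth_proj (U\<^sup>\<bottom>) y + orth_proj (V\<^sup>\<bottom>) y"
  shows "linear (moore_penrose S)" "moore_penrose S x \<bullet> y = x \<bullet> moore_penrose S y"
    "S (moore_penrose S x) = x - orth_proj (U \<inter> V) x"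
    "moore_penrose S (S x) = x - orth_proj (U \<inter> V) x"
proof -
  have S: "linear S"
    unfolding S_def by (intro linear_compose_add linear_orth_proj subspace_orthogonal_comp)
  have S_sym: "S x \<bullet> y = x \<bullet> S y" for x y
    by (simp add: S_def inner_add_left inner_add_right orth_proj_inner_commute subspace_orthogonal_comp)
  have "{x. S x = 0} = U \<inter> V"
    unfolding S_def by (rule kernel_orth_proj_orthogonal_comp_add[OF U V])
  with moore_penrose_selfadjoint[OF S S_sym]
  show "linear (moore_penrose S)" "moore_penrose S x \<bullet> y = x \<bullet> moore_penrose S y"
    "S (moore_penrose S x) = x - orth_proj (U \<inter> V) x"
    "moore_penrose S (S x) = x - orth_proj (U \<inter> V) x"
    by simp_all
qed

lemma orth_proj_moore_penrose_orth_proj_commute: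
  fixes U V :: "'a::euclidean_space set"
  assumes U: "subspace U" and V: "subspace V"
  defines "A \<equiv> orth_proj (U\<^sup>\<bottom>)" and "B \<equiv> orth_proj (V\<^sup>\<bottom>)"
    and "T \<equiv> moore_penrose (\<lambda>y. orth_proj (U\<^sup>\<bottom>) y + orth_proj (V\<^sup>\<bottom>) y)"
  shows "A (T (B x)) = B (T (A x))"
proof -
  have A: "linear A" and A_sym: "\<And>x y. A x \<bullet> y = x \<bullet> A y"
    unfolding A_def by (simp_all add: linear_orth_proj orth_proj_inner_commute subspace_orthogonal_comp)
  have B_sym: "\<And>x y. B x \<bullet> y = x \<bullet> B y"
    unfolding B_def by (simp add: orth_proj_inner_commute subspace_orthogonal_comp)
  note T = moore_penrose_orth_proj_orthogonal_comp_add[OF U V, folded T_def, folded A_def B_def]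
  have "A (orth_proj (U \<inter> V) y) = 0" for y
    unfolding A_def using orth_proj_in[OF subspace_inter[OF U V]]
    by (simp add: orth_proj_orthogonal_comp_eq_0_iff U)
  then have ATS: "A (T (A y + B y)) = A y" for y
    by (simp add: T(4) linear_diff[OF A])
  have ATB: "A (T (B x)) = A x - A (T (A x))" for x
    using ATS[of x] by (simp add: linear_add[OF T(1)] linear_add[OF A] eq_diff_eq add.commute)
  have "A (T (B x)) \<bullet> y = B (T (A x)) \<bullet> y" for y
  proof -
    have "A (T (B x)) \<bullet> y = x \<bullet> A (T (B y))"
      by (simp add: ATB inner_diff_left inner_diff_right A_sym T(2))
    also have "\<dots> = B (T (A x)) \<bullet> y"
      by (simp add: A_sym B_sym T(2))
    finally show ?thesis .
  qed
  then show ?thesis using vector_eq_rdot by blast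
qed

lemma orth_proj_subspace_sum:
  fixes U V :: "'a::euclidean_space set"
  assumes U: "subspace U" and V: "subspace V"
  defines "A \<equiv> orth_proj (U\<^sup>\<bottom>)" and "B \<equiv> orth_proj (V\<^sup>\<bottom>)"
    and "T \<equiv> moore_penrose (\<lambda>y. orth_proj (U\<^sup>\<bottom>) y + orth_proj (V\<^sup>\<bottom>) y)"
  shows "orth_proj {u + v |u v. u \<in> U \<and> v \<in> V} x = x - 2 *\<^sub>R A (T (B x))"
proof (rule orth_proj_eqI[OF subspace_sums[OF U V]])
  note T = moore_penrose_orth_proj_orthogonal_comp_add[OF U V, folded T_def, folded A_def B_def]
  have A_eq: "A y = y - orth_proj U y" for y unfolding A_def by (rule orth_proj_orthogonal_comp[OF U])
  have B_eq: "B y = y - orth_proj V y" for y unfolding B_def by (rule orth_proj_orthogonal_comp[OF V])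
  have comm: "A (T (B x)) = B (T (A x))"
    unfolding A_def B_def T_def by (rule orth_proj_moore_penrose_orth_proj_commute[OF U V])
  define u where "u = orth_proj (U \<inter> V) x + (T (B x) - A (T (B x)))"
  define v where "v = T (A x) - B (T (A x))"
  have "orth_proj (U \<inter> V) x \<in> U"
    using orth_proj_in[OF subspace_inter[OF U V]] by blast
  then have "u \<in> U"
    unfolding u_def A_eq by (simp add: subspace_add[OF U] orth_proj_in[OF U])
  moreover have "v \<in> V"
    unfolding v_def B_eq by (simp add: orth_proj_in[OF V])
  moreover have "x - 2 *\<^sub>R A (T (B x)) = u + v"
  proof -
    have "T (B x) + T (A x) = x - orth_proj (U \<inter> V) x"
      using T(4)[of x] by (simp add: linear_add[OF T(1)] add.commute)
    then show ?thesis unfolding u_def v_def using comm by (simp add: algebra_simps scaleR_2)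
  qed
  ultimately show "x - 2 *\<^sub>R A (T (B x)) \<in> {u + v |u v. u \<in> U \<and> v \<in> V}" by blast
  have "(u + v) \<bullet> A (T (B x)) = 0" if "u \<in> U" "v \<in> V" for u v
  proof -
    have "u \<bullet> A (T (B x)) = 0"
      unfolding A_def by (rule orthogonal_comp_inner_eq_0[OF orth_proj_in[OF subspace_orthogonal_comp] that(1)])
    moreover have "v \<bullet> B (T (A x)) = 0"
      unfolding B_def by (rule orthogonal_comp_inner_eq_0[OF orth_proj_in[OF subspace_orthogonal_comp] that(2)])
    ultimately show ?thesis by (simp add: inner_add_left comm)
  qed
  then show "x - (x - 2 *\<^sub>R A (T (B x))) \<in> {u + v |u v. u \<in> U \<and> v \<in> V}\<^sup>\<bottom>"
    by (auto simp: orthogonal_comp_def orthogonal_def)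
qed

theorem mainTheorem4:
  fixes U V :: "'a::euclidean_space set"
  assumes "subspace U" and "subspace V"
  shows "orth_proj {u + v | u v. u \<in> U \<and> v \<in> V}
           = (\<lambda>x. x - 2 *\<^sub>R orth_proj (orthogonal_comp U)
                 (moore_penrose (\<lambda>y. orth_proj (orthogonal_comp U) y + orth_proj (orthogonal_comp V) y)
                   (orth_proj (orthogonal_comp V) x)))
       \<and> (\<lambda>x. x - 2 *\<^sub>R orth_proj (orthogonal_comp U)
                 (moore_penrose (\<lambda>y. orth_proj (orthogonal_comp U) y + orth_proj (orthogonal_comp V) y)
                   (orth_proj (orthogonal_comp V) x)))
         = (\<lambda>x. x - 2 *\<^sub>R (\<lambda>z. z - orth_proj U z)
                 (moore_penrose (\<lambda>y. 2 *\<^sub>R y - orth_proj U y - orth_proj V y)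
                   (x - orth_proj V x)))"
proof
  show "orth_proj {u + v | u v. u \<in> U \<and> v \<in> V} = (\<lambda>x. x - 2 *\<^sub>R orth_proj (U\<^sup>\<bottom>)
      (moore_penrose (\<lambda>y. orth_proj (U\<^sup>\<bottom>) y + orth_proj (V\<^sup>\<bottom>) y) (orth_proj (V\<^sup>\<bottom>) x)))"
    using orth_proj_subspace_sum[OF assms] by blast
  have "orth_proj (U\<^sup>\<bottom>) = (\<lambda>z. z - orth_proj U z)" "orth_proj (V\<^sup>\<bottom>) = (\<lambda>z. z - orth_proj V z)"
    by (simp_all add: fun_eq_iff orth_proj_orthogonal_comp assms)
  moreover have "(\<lambda>y. (y - orth_proj U y) + (y - orth_proj V y)) = (\<lambda>y. 2 *\<^sub>R y - orth_proj U y - orth_proj V y)"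
    by (simp add: fun_eq_iff scaleR_2 algebra_simps)
  ultimately show "(\<lambda>x. x - 2 *\<^sub>R orth_proj (U\<^sup>\<bottom>)
      (moore_penrose (\<lambda>y. orth_proj (U\<^sup>\<bottom>) y + orth_proj (V\<^sup>\<bottom>) y) (orth_proj (V\<^sup>\<bottom>) x)))
    = (\<lambda>x. x - 2 *\<^sub>R (\<lambda>z. z - orth_proj U z)
      (moore_penrose (\<lambda>y. 2 *\<^sub>R y - orth_proj U y - orth_proj V y) (x - orth_proj V x)))"
    by simp
qed

end
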